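(* Let $\varkappa\colon(P,\mathfrak p,k)\to(R,\mathfrak m,k)$ be a surjective homomorphism of local rings, let $\mathcal D$ be a minimal free resolution of $k$ over $P$ with a graded-commutative DG algebra structure, and let $\mathcal A=\mathcal D\otimes_PR$. Suppose there is a positive integer $a$ such that (1) the map $\operatorname{Tor}_i^P(R,k)\to\operatorname{Tor}_i^P(R/\mathfrak m^a,k)$ induced by the projection $R\to R/\mathfrak m^a$ is zero for all $i>0$; (2) the map $\operatorname{Tor}_i^P(\mathfrak m^{2a},k)\to\operatorname{Tor}_i^P(\mathfrak m^a,k)$ induced by the inclusion $\mathfrak m^{2a}\subseteq\mathfrak m^a$ is zero for all $i\ge0$. Then $\varkappa$ is a Golod homomorphism. Furthermore, the trivial Massey operation $\mu$ can be constructed so that its image is contained in $\mathfrak m^a\mathcal A$.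
   Context: For $x\in\mathcal A$ put $\bar x=(-1)^{|x|+1}x$; let $\mathbf h$ be a homogeneous $k$-basis of $H_{\ge1}(\mathcal A)$. A trivial Massey operation is a function $\mu\colon\bigsqcup_{n\ge1}\mathbf h^n\to\mathcal A$ such that $\mu(h)$ is a cycle in the class $h$ for each $h\in\mathbf h$; $\partial\mu(h_1,\dots,h_n)=\sum_{i=1}^{n-1}\overline{\mu(h_1,\dots,h_i)}\mu(h_{i+1},\dots,h_n)$ for $n\ge2$; and $\mu(\mathbf h^n)\subseteq\mathfrak m\mathcal A$ for all $n\ge1$. The homomorphism $\varkappa$ is called Golod if $\mathcal A$ admits a trivial Massey operation. *)

theory Defs
  imports Main
begin

definition is_ideal :: "'a::comm_ring_1 set \<Rightarrow> bool" where
  "is_ideal I \<longleftrightarrow> 0 \<in> I \<and> (\<forall>x\<in>I. \<forall>y\<in>I. x + y \<in> I) \<and> (\<forall>r x. x \<in> I \<longrightarrow> r * x \<in> I)"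

definition ideal_gen :: "'a::comm_ring_1 set \<Rightarrow> 'a set" where
  "ideal_gen S = \<Inter>{I. is_ideal I \<and> S \<subseteq> I}"

definition ideal_prod :: "'a::comm_ring_1 set \<Rightarrow> 'a set \<Rightarrow> 'a set" where
  "ideal_prod I J = ideal_gen {x * y | x y. x \<in> I \<and> y \<in> J}"

fun ideal_pow :: "'a::comm_ring_1 set \<Rightarrow> nat \<Rightarrow> 'a set" where
  "ideal_pow I 0 = UNIV"
| "ideal_pow I (Suc n) = ideal_prod I (ideal_pow I n)"

definition maximal_ideal :: "'a::comm_ring_1 set \<Rightarrow> bool" where
  "maximal_ideal M \<longleftrightarrow> is_ideal M \<and> M \<noteq> UNIV \<and>
     (\<forall>J. is_ideal J \<and> M \<subseteq> J \<longrightarrow> J = M \<or> J = UNIV)"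

definition noetherian_ring :: "'a::comm_ring_1 itself \<Rightarrow> bool" where
  "noetherian_ring _ \<longleftrightarrow> (\<forall>I::'a set. is_ideal I \<longrightarrow> (\<exists>S. finite S \<and> I = ideal_gen S))"

definition local_ring :: "'a::comm_ring_1 set \<Rightarrow> bool" where
  "local_ring M \<longleftrightarrow> noetherian_ring TYPE('a) \<and> maximal_ideal M \<and>
     (\<forall>J. maximal_ideal J \<longrightarrow> J = M)"

definition ring_hom :: "('a::comm_ring_1 \<Rightarrow> 'b::comm_ring_1) \<Rightarrow> bool" where
  "ring_hom f \<longleftrightarrow> f 1 = 1 \<and> (\<forall>x y. f (x + y) = f x + f y) \<and> (\<forall>x y. f (x * y) = f x * f y)"

text \<open>The degree-i component of a graded free module with ranks b is modelled as
  the coordinate vectors \<open>vec (b i)\<close>: functions nat => ring vanishing from index b i on.\<close>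

definition vec :: "nat \<Rightarrow> (nat \<Rightarrow> 'a::zero) set" where
  "vec n = {v. \<forall>j\<ge>n. v j = 0}"

definition vzero :: "nat \<Rightarrow> 'a::zero" where "vzero = (\<lambda>_. 0)"

definition vadd :: "(nat \<Rightarrow> 'a::comm_ring_1) \<Rightarrow> (nat \<Rightarrow> 'a) \<Rightarrow> nat \<Rightarrow> 'a" where
  "vadd x y = (\<lambda>s. x s + y s)"

definition vsub :: "(nat \<Rightarrow> 'a::comm_ring_1) \<Rightarrow> (nat \<Rightarrow> 'a) \<Rightarrow> nat \<Rightarrow> 'a" where
  "vsub x y = (\<lambda>s. x s - y s)"

definition smult :: "'a::comm_ring_1 \<Rightarrow> (nat \<Rightarrow> 'a) \<Rightarrow> nat \<Rightarrow> 'a" where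
  "smult r v = (\<lambda>s. r * v s)"

text \<open>Differential \<open>\<partial>_i : F_i \<rightarrow> F_{i-1}\<close> given by matrices \<open>d i s t\<close>
  (row s < b (i-1), column t < b i); \<open>\<partial>_0 = 0\<close>.\<close>
definition cdiff :: "(nat \<Rightarrow> nat) \<Rightarrow> (nat \<Rightarrow> nat \<Rightarrow> nat \<Rightarrow> 'a::comm_ring_1) \<Rightarrow> nat \<Rightarrow> (nat \<Rightarrow> 'a) \<Rightarrow> nat \<Rightarrow> 'a" where
  "cdiff b d i v = (\<lambda>s. if i = 0 \<or> b (i - 1) \<le> s then 0 else (\<Sum>t<b i. d i s t * v t))"

text \<open>Bilinear multiplication \<open>F_i \<times> F_j \<rightarrow> F_{i+j}\<close> given by structure constants
  \<open>e_s e_t = \<Sum>_u c i j s t u e_u\<close>.\<close>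
definition cmult :: "(nat \<Rightarrow> nat) \<Rightarrow> (nat \<Rightarrow> nat \<Rightarrow> nat \<Rightarrow> nat \<Rightarrow> nat \<Rightarrow> 'a::comm_ring_1)
    \<Rightarrow> nat \<Rightarrow> nat \<Rightarrow> (nat \<Rightarrow> 'a) \<Rightarrow> (nat \<Rightarrow> 'a) \<Rightarrow> nat \<Rightarrow> 'a" where
  "cmult b c i j x y = (\<lambda>u. if b (i + j) \<le> u then 0
      else (\<Sum>s<b i. \<Sum>t<b j. c i j s t u * x s * y t))"

definition min_dga_resolution ::
  "'p::comm_ring_1 set \<Rightarrow> (nat \<Rightarrow> nat) \<Rightarrow> (nat \<Rightarrow> nat \<Rightarrow> nat \<Rightarrow> 'p) \<Rightarrow> (nat \<Rightarrow> nat \<Rightarrow> nat \<Rightarrow> nat \<Rightarrow> nat \<Rightarrow> 'p) \<Rightarrow> bool"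
  where
  "min_dga_resolution p b d c \<longleftrightarrow>
     \<comment> \<open>resolution of k = P/p: D_0 = P, image of \<partial>_1 is p, complex, exact in degrees \<ge> 1\<close>
     b 0 = 1 \<and>
     {cdiff b d 1 w 0 | w. w \<in> vec (b 1)} = p \<and>
     (\<forall>i. \<forall>v\<in>vec (b (Suc i)). cdiff b d i (cdiff b d (Suc i) v) = vzero) \<and>
     (\<forall>i\<ge>1. \<forall>v\<in>vec (b i). cdiff b d i v = vzero \<longrightarrow>
        (\<exists>w\<in>vec (b (Suc i)). cdiff b d (Suc i) w = v)) \<and>
     \<comment> \<open>minimality: \<partial>(D) \<subseteq> pD\<close>
     (\<forall>i\<ge>1. \<forall>s<b (i - 1). \<forall>t<b i. d i s t \<in> p) \<and>
     \<comment> \<open>unital\<close>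
     (\<exists>e\<in>vec (b 0). \<forall>j. \<forall>y\<in>vec (b j). cmult b c 0 j e y = y \<and> cmult b c j 0 y e = y) \<and>
     \<comment> \<open>associative\<close>
     (\<forall>i j l. \<forall>x\<in>vec (b i). \<forall>y\<in>vec (b j). \<forall>z\<in>vec (b l).
        cmult b c (i + j) l (cmult b c i j x y) z = cmult b c i (j + l) x (cmult b c j l y z)) \<and>
     \<comment> \<open>graded-commutative (strictly: odd elements square to zero)\<close>
     (\<forall>i j. \<forall>x\<in>vec (b i). \<forall>y\<in>vec (b j).
        cmult b c i j x y = smult ((-1) ^ (i * j)) (cmult b c j i y x)) \<and>
     (\<forall>i. odd i \<longrightarrow> (\<forall>x\<in>vec (b i). cmult b c i i x x = vzero)) \<and>
     \<comment> \<open>Leibniz rule\<close>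
     (\<forall>i j. \<forall>x\<in>vec (b i). \<forall>y\<in>vec (b j).
        cdiff b d (i + j) (cmult b c i j x y) =
          vadd (cmult b c (i - 1) j (cdiff b d i x) y)
               (smult ((-1) ^ i) (cmult b c i (j - 1) x (cdiff b d j y))))"

definition boundaries :: "(nat \<Rightarrow> nat) \<Rightarrow> (nat \<Rightarrow> nat \<Rightarrow> nat \<Rightarrow> 'a::comm_ring_1) \<Rightarrow> nat \<Rightarrow> (nat \<Rightarrow> 'a) set" where
  "boundaries b d i = cdiff b d (Suc i) ` vec (b (Suc i))"

definition hclass :: "(nat \<Rightarrow> nat) \<Rightarrow> (nat \<Rightarrow> nat \<Rightarrow> nat \<Rightarrow> 'a::comm_ring_1) \<Rightarrow> nat \<Rightarrow> (nat \<Rightarrow> 'a) set \<Rightarrow> bool" where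
  "hclass b d i C \<longleftrightarrow> (\<exists>z\<in>vec (b i). cdiff b d i z = vzero \<and> C = vadd z ` boundaries b d i)"

text \<open>H is a homogeneous k-basis (k = R/m) of H_{\<ge>1}; elements are pairs (degree, class).\<close>
definition hbasis :: "(nat \<Rightarrow> nat) \<Rightarrow> (nat \<Rightarrow> nat \<Rightarrow> nat \<Rightarrow> 'a::comm_ring_1) \<Rightarrow> 'a set
    \<Rightarrow> (nat \<times> (nat \<Rightarrow> 'a) set) set \<Rightarrow> bool" where
  "hbasis b d m H \<longleftrightarrow>
     (\<forall>h\<in>H. fst h \<ge> 1 \<and> hclass b d (fst h) (snd h)) \<and>
     (\<forall>i F r zs. finite F \<and> F \<subseteq> {h\<in>H. fst h = i} \<and> (\<forall>h\<in>F. zs h \<in> snd h) \<and>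
        (\<lambda>s. \<Sum>h\<in>F. r h * zs h s) \<in> boundaries b d i \<longrightarrow> (\<forall>h\<in>F. r h \<in> m)) \<and>
     (\<forall>i\<ge>1. \<forall>z\<in>vec (b i). cdiff b d i z = vzero \<longrightarrow>
        (\<exists>F r zs. finite F \<and> F \<subseteq> {h\<in>H. fst h = i} \<and> (\<forall>h\<in>F. zs h \<in> snd h) \<and>
           vsub z (\<lambda>s. \<Sum>h\<in>F. r h * zs h s) \<in> boundaries b d i))"

text \<open>Degree of \<open>\<mu>(h_1,...,h_n)\<close>: \<open>|h_1| + ... + |h_n| + n - 1\<close>.\<close>
definition mdeg :: "(nat \<times> 'c) list \<Rightarrow> nat" where
  "mdeg hs = sum_list (map fst hs) + length hs - 1"

definition trivial_massey :: "(nat \<Rightarrow> nat) \<Rightarrow> (nat \<Rightarrow> nat \<Rightarrow> nat \<Rightarrow> 'a::comm_ring_1)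
    \<Rightarrow> (nat \<Rightarrow> nat \<Rightarrow> nat \<Rightarrow> nat \<Rightarrow> nat \<Rightarrow> 'a) \<Rightarrow> 'a set
    \<Rightarrow> (nat \<times> (nat \<Rightarrow> 'a) set) set \<Rightarrow> ((nat \<times> (nat \<Rightarrow> 'a) set) list \<Rightarrow> nat \<Rightarrow> 'a) \<Rightarrow> bool" where
  "trivial_massey b d c m H \<mu> \<longleftrightarrow>
     (\<forall>hs. hs \<noteq> [] \<and> set hs \<subseteq> H \<longrightarrow> \<mu> hs \<in> vec (b (mdeg hs)) \<and> (\<forall>s. \<mu> hs s \<in> m)) \<and>
     (\<forall>h\<in>H. \<mu> [h] \<in> snd h) \<and>
     (\<forall>hs. length hs \<ge> 2 \<and> set hs \<subseteq> H \<longrightarrow>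
        cdiff b d (mdeg hs) (\<mu> hs) =
          (\<lambda>s. \<Sum>i\<in>{1..<length hs}.
             cmult b c (mdeg (take i hs)) (mdeg (drop i hs))
               (smult ((-1) ^ (mdeg (take i hs) + 1)) (\<mu> (take i hs))) (\<mu> (drop i hs)) s))"

definition golod :: "(nat \<Rightarrow> nat) \<Rightarrow> (nat \<Rightarrow> nat \<Rightarrow> nat \<Rightarrow> 'a::comm_ring_1)
    \<Rightarrow> (nat \<Rightarrow> nat \<Rightarrow> nat \<Rightarrow> nat \<Rightarrow> nat \<Rightarrow> 'a) \<Rightarrow> 'a set \<Rightarrow> bool" where
  "golod b d c m \<longleftrightarrow> (\<exists>H. hbasis b d m H \<and> (\<exists>\<mu>. trivial_massey b d c m H \<mu>))"

text \<open>Tor_i^P(R,k) \<rightarrow> Tor_i^P(R/m^a,k) is zero for all i > 0: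
  every cycle of A_i is a boundary modulo m^a A.\<close>
definition tor_cond1 :: "(nat \<Rightarrow> nat) \<Rightarrow> (nat \<Rightarrow> nat \<Rightarrow> nat \<Rightarrow> 'a::comm_ring_1) \<Rightarrow> 'a set \<Rightarrow> nat \<Rightarrow> bool" where
  "tor_cond1 b d m a \<longleftrightarrow>
     (\<forall>i>0. \<forall>z\<in>vec (b i). cdiff b d i z = vzero \<longrightarrow>
        (\<exists>w\<in>vec (b (Suc i)). \<forall>s. z s - cdiff b d (Suc i) w s \<in> ideal_pow m a))"

text \<open>Tor_i^P(m^{2a},k) \<rightarrow> Tor_i^P(m^a,k) is zero for all i \<ge> 0, using
  D \<otimes>_P I = I-valued vectors of A (D is free).\<close>
definition tor_cond2 :: "(nat \<Rightarrow> nat) \<Rightarrow> (nat \<Rightarrow> nat \<Rightarrow> nat \<Rightarrow> 'a::comm_ring_1) \<Rightarrow> 'a set \<Rightarrow> nat \<Rightarrow> bool" where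
  "tor_cond2 b d m a \<longleftrightarrow>
     (\<forall>i. \<forall>z\<in>vec (b i). (\<forall>s. z s \<in> ideal_pow m (2 * a)) \<and> cdiff b d i z = vzero \<longrightarrow>
        (\<exists>w\<in>vec (b (Suc i)). (\<forall>s. w s \<in> ideal_pow m a) \<and> cdiff b d (Suc i) w = z))"

end

theory Submission
  imports Defs
begin

text \<open>
  The trivial Massey operation \<open>\<mu>\<close> on \<open>A = D \<otimes> R\<close> is built by recursion on the length of the
  sequence of basis classes. By condition (1) every basis class has a representing cycle with
  coefficients in \<open>m\<^sup>a\<close>. If all values on shorter sequences have coefficients in \<open>m\<^sup>a\<close>, the
  Massey sum of products of these values has coefficients in \<open>m\<^sup>2\<^sup>a\<close>, and it is a cycle: by the
  Leibniz rule and associativity its boundary is a sum of triple products, each occurring twice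
  with opposite signs. Condition (2) then makes it the boundary of a chain with coefficients in
  \<open>m\<^sup>a\<close>, which is taken as the next value of \<open>\<mu>\<close>. A homogeneous basis of the homology exists by
  Zorn's lemma, because \<open>H(A) = Tor\<^sup>P(R, k)\<close> is annihilated by \<open>m\<close>.
\<close>

lemma cdiff_vadd: "cdiff b d i (vadd x y) = vadd (cdiff b d i x) (cdiff b d i y)"
  by (auto simp: cdiff_def vadd_def distrib_left sum.distrib fun_eq_iff)

lemma cdiff_smult: "cdiff b d i (smult r x) = smult r (cdiff b d i x)"
  by (auto simp: cdiff_def smult_def sum_distrib_left fun_eq_iff mult_ac)

lemma cdiff_sum: "cdiff b d i (\<lambda>s. \<Sum>k\<in>K. g k s) = (\<lambda>s. \<Sum>k\<in>K. cdiff b d i (g k) s)"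
  by (auto simp: cdiff_def sum_distrib_left fun_eq_iff intro: sum.swap)

lemma cdiff_vzero: "cdiff b d i vzero = vzero"
  by (auto simp: cdiff_def vzero_def fun_eq_iff)

lemma cmult_smult_left: "cmult b c i j (smult r x) y = smult r (cmult b c i j x y)"
  by (auto simp: cmult_def smult_def sum_distrib_left fun_eq_iff mult_ac)

lemma cmult_smult_right: "cmult b c i j x (smult r y) = smult r (cmult b c i j x y)"
  by (auto simp: cmult_def smult_def sum_distrib_left fun_eq_iff mult_ac)

lemma cmult_sum_left:
  "cmult b c i j (\<lambda>s. \<Sum>k\<in>K. g k s) y = (\<lambda>u. \<Sum>k\<in>K. cmult b c i j (g k) y u)"
  by (simp add: cmult_def fun_eq_iff sum_distrib_left sum_distrib_right mult_ac sum.swap[of _ K])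

lemma cmult_sum_right:
  "cmult b c i j x (\<lambda>s. \<Sum>k\<in>K. g k s) = (\<lambda>u. \<Sum>k\<in>K. cmult b c i j x (g k) u)"
  by (simp add: cmult_def fun_eq_iff sum_distrib_left sum_distrib_right mult_ac sum.swap[of _ K])

lemma cmult_vzero_right: "cmult b c i j x vzero = vzero"
  by (auto simp: cmult_def vzero_def fun_eq_iff)

lemma cmult_vec: "cmult b c i j x y \<in> vec (b (i + j))"
  by (auto simp: cmult_def vec_def)

lemma cdiff_vec: "cdiff b d (Suc i) x \<in> vec (b i)"
  by (auto simp: cdiff_def vec_def)

lemma smult_vec: "x \<in> vec n \<Longrightarrow> smult r x \<in> vec n"
  by (auto simp: smult_def vec_def)

lemma vadd_vec: "x \<in> vec n \<Longrightarrow> y \<in> vec n \<Longrightarrow> vadd x y \<in> vec n"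
  by (auto simp: vadd_def vec_def)

lemma is_idealD:
  assumes "is_ideal I"
  shows "0 \<in> I" "x \<in> I \<Longrightarrow> y \<in> I \<Longrightarrow> x + y \<in> I" "x \<in> I \<Longrightarrow> r * x \<in> I"
    "x \<in> I \<Longrightarrow> x * r \<in> I" "x \<in> I \<Longrightarrow> - x \<in> I"
proof -
  show "x \<in> I \<Longrightarrow> x * r \<in> I" using assms by (metis is_ideal_def mult.commute)
  show "x \<in> I \<Longrightarrow> - x \<in> I" using assms unfolding is_ideal_def by (metis mult_minus1)
qed (use assms in \<open>auto simp: is_ideal_def\<close>)

lemma ideal_sum: "is_ideal I \<Longrightarrow> (\<And>k. k \<in> K \<Longrightarrow> f k \<in> I) \<Longrightarrow> sum f K \<in> I"
  by (induction K rule: infinite_finite_induct) (auto dest: is_idealD)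

lemma is_ideal_ideal_gen: "is_ideal (ideal_gen S)"
  by (auto simp: ideal_gen_def is_ideal_def)

lemma ideal_gen_subset: "S \<subseteq> ideal_gen S"
  by (auto simp: ideal_gen_def)

lemma ideal_gen_least: "is_ideal I \<Longrightarrow> S \<subseteq> I \<Longrightarrow> ideal_gen S \<subseteq> I"
  by (auto simp: ideal_gen_def)

lemma is_ideal_ideal_pow: "is_ideal (ideal_pow I k)"
proof (cases k)
  case 0
  then show ?thesis by (simp add: is_ideal_def)
qed (simp add: ideal_prod_def is_ideal_ideal_gen)

lemma ideal_pow_mult:
  "x \<in> ideal_pow I i \<Longrightarrow> y \<in> ideal_pow I j \<Longrightarrow> x * y \<in> ideal_pow I (i + j)"
proof (induction i arbitrary: x y)
  case 0
  then show ?case using is_ideal_ideal_pow is_idealD(3) by fastforce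
next
  case (Suc n)
  let ?J = "{x. \<forall>y \<in> ideal_pow I j. x * y \<in> ideal_pow I (Suc n + j)}"
  have "is_ideal ?J"
    using is_idealD[OF is_ideal_ideal_pow[of I "Suc n + j"]]
    unfolding is_ideal_def by (auto simp: distrib_right mult.assoc)
  moreover have "{x * y |x y. x \<in> I \<and> y \<in> ideal_pow I n} \<subseteq> ?J"
  proof clarify
    fix u v w assume "u \<in> I" "v \<in> ideal_pow I n" "w \<in> ideal_pow I j"
    then have "u * (v * w) \<in> ideal_pow I (Suc (n + j))"
      using Suc.IH ideal_gen_subset by (fastforce simp: ideal_prod_def)
    then show "u * v * w \<in> ideal_pow I (Suc n + j)" by (simp add: mult.assoc)
  qed
  ultimately have "ideal_pow I (Suc n) \<subseteq> ?J"
    unfolding ideal_pow.simps ideal_prod_def by (rule ideal_gen_least)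
  then show ?case using Suc.prems by blast
qed

lemma ideal_pow_subset:
  assumes "is_ideal I" "0 < a"
  shows "ideal_pow I a \<subseteq> I"
proof -
  obtain n where "a = Suc n" using assms(2) gr0_conv_Suc by blast
  moreover have "{x * y |x y. x \<in> I \<and> y \<in> ideal_pow I n} \<subseteq> I"
    using is_idealD(4)[OF assms(1)] by blast
  ultimately show ?thesis by (simp add: ideal_prod_def ideal_gen_least[OF assms(1)])
qed

lemma maximal_idealD: "maximal_ideal M \<Longrightarrow> is_ideal M" "maximal_ideal M \<Longrightarrow> 1 \<notin> M"
  unfolding maximal_ideal_def by (auto dest: is_idealD(4))

lemma maximal_ideal_inverse_mod:
  assumes "maximal_ideal M" "r \<notin> M"
  shows "\<exists>q. q * r - 1 \<in> M"
proof -
  have M: "is_ideal M" by (rule maximal_idealD(1)[OF assms(1)])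
  let ?J = "{x + y * r | x y. x \<in> M}"
  have "is_ideal ?J"
    unfolding is_ideal_def
  proof (intro conjI allI ballI impI)
    show "0 \<in> ?J" using is_idealD(1)[OF M] by (auto intro!: exI[of _ 0])
  next
    fix u v assume "u \<in> ?J" "v \<in> ?J"
    then obtain x y x' y' where "u = x + y * r" "v = x' + y' * r" "x \<in> M" "x' \<in> M" by blast
    then have "u + v = (x + x') + (y + y') * r" "x + x' \<in> M"
      using is_idealD(2)[OF M] by (auto simp: algebra_simps)
    then show "u + v \<in> ?J" by blast
  next
    fix q u assume "u \<in> ?J"
    then obtain x y where "u = x + y * r" and x: "x \<in> M" by blast
    then have "q * u = q * x + (q * y) * r" "q * x \<in> M"
      using is_idealD(3)[OF M x] by (simp_all add: algebra_simps)
    then show "q * u \<in> ?J" by blast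
  qed
  moreover have "M \<subseteq> ?J" by (force intro: exI[of _ 0])
  moreover have "r \<in> ?J" using is_idealD(1)[OF M] by (force intro: exI[of _ 0] exI[of _ 1])
  ultimately have "?J = UNIV" using assms unfolding maximal_ideal_def by blast
  then obtain x y where "1 = x + y * r" "x \<in> M" by blast
  then have "y * r - 1 = - x" by (simp add: algebra_simps)
  then show ?thesis using is_idealD(5)[OF M \<open>x \<in> M\<close>] by metis
qed

lemma ring_hom_zero: "ring_hom f \<Longrightarrow> f 0 = 0"
  unfolding ring_hom_def by (metis add_cancel_right_right)

lemma ring_hom_minus: "ring_hom f \<Longrightarrow> f (- x) = - f x"
  unfolding ring_hom_def by (metis add.right_inverse add_eq_0_iff ring_hom_zero[unfolded ring_hom_def])

lemma ring_hom_sum: "ring_hom f \<Longrightarrow> f (sum g K) = (\<Sum>k\<in>K. f (g k))"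
  by (induction K rule: infinite_finite_induct) (auto simp: ring_hom_zero, simp add: ring_hom_def)

lemma ring_hom_minus_one_power: "ring_hom f \<Longrightarrow> f ((-1) ^ n) = (-1) ^ n"
  by (induction n) (auto simp: ring_hom_def ring_hom_minus)

lemma surj_zero_preserving_lift:
  assumes "surj f" "f 0 = 0" "z \<in> vec n"
  shows "\<exists>z'\<in>vec n. (\<lambda>s. f (z' s)) = z"
proof -
  define z' where "z' = (\<lambda>s. if z s = 0 then 0 else inv f (z s))"
  have "(\<lambda>s. f (z' s)) = z" using assms(1,2) by (auto simp: z'_def fun_eq_iff surj_f_inv_f)
  moreover have "z' \<in> vec n" using assms(3) by (auto simp: z'_def vec_def)
  ultimately show ?thesis by blast
qed

context
  fixes f :: "'p::comm_ring_1 \<Rightarrow> 'r::comm_ring_1"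
  assumes hom: "ring_hom f"
begin

lemma ring_hom_cdiff: "(\<lambda>s. f (cdiff b d i x s)) = cdiff b (\<lambda>i s t. f (d i s t)) i (\<lambda>s. f (x s))"
  using hom by (auto simp: cdiff_def fun_eq_iff ring_hom_zero ring_hom_sum ring_hom_def)

lemma ring_hom_cmult:
  "(\<lambda>u. f (cmult b c i j x y u)) = cmult b (\<lambda>i j s t u. f (c i j s t u)) i j (\<lambda>s. f (x s)) (\<lambda>s. f (y s))"
  using hom by (auto simp: cmult_def fun_eq_iff ring_hom_zero ring_hom_sum ring_hom_def)

lemma ring_hom_vadd: "(\<lambda>s. f (vadd x y s)) = vadd (\<lambda>s. f (x s)) (\<lambda>s. f (y s))"
  using hom by (simp add: vadd_def ring_hom_def)

lemma ring_hom_smult: "(\<lambda>s. f (smult r x s)) = smult (f r) (\<lambda>s. f (x s))"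
  using hom by (simp add: smult_def ring_hom_def)

lemma ring_hom_vzero: "(\<lambda>s. f (vzero s)) = vzero"
  using hom by (simp add: vzero_def ring_hom_zero)

end

lemma vzero_boundary: "vzero \<in> boundaries b d i"
proof -
  have "vzero \<in> vec (b (Suc i))" by (simp add: vec_def vzero_def)
  then show ?thesis using cdiff_vzero unfolding boundaries_def by (metis image_eqI)
qed

lemma boundaries_vadd: "x \<in> boundaries b d i \<Longrightarrow> y \<in> boundaries b d i \<Longrightarrow> vadd x y \<in> boundaries b d i"
  unfolding boundaries_def by (auto simp: cdiff_vadd[symmetric] intro!: imageI vadd_vec)

lemma boundaries_smult: "x \<in> boundaries b d i \<Longrightarrow> smult r x \<in> boundaries b d i"
  unfolding boundaries_def by (auto simp: cdiff_smult[symmetric] intro!: imageI smult_vec)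

lemma boundaries_lincomb:
  "x \<in> boundaries b d i \<Longrightarrow> y \<in> boundaries b d i \<Longrightarrow> (\<lambda>s. r * x s + q * y s) \<in> boundaries b d i"
  using boundaries_vadd[OF boundaries_smult[of x b d i r] boundaries_smult[of y b d i q]]
  by (simp add: vadd_def smult_def)

lemma boundaries_subset_vec: "boundaries b d i \<subseteq> vec (b i)"
  unfolding boundaries_def using cdiff_vec by blast

locale dg_algebra =
  fixes b :: "nat \<Rightarrow> nat" and d :: "nat \<Rightarrow> nat \<Rightarrow> nat \<Rightarrow> 'a::comm_ring_1"
    and c :: "nat \<Rightarrow> nat \<Rightarrow> nat \<Rightarrow> nat \<Rightarrow> nat \<Rightarrow> 'a"
  assumes cdiff_cdiff: "v \<in> vec (b (Suc i)) \<Longrightarrow> cdiff b d i (cdiff b d (Suc i) v) = vzero"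
    and cdiff_cmult: "x \<in> vec (b i) \<Longrightarrow> y \<in> vec (b j) \<Longrightarrow>
      cdiff b d (i + j) (cmult b c i j x y) =
        vadd (cmult b c (i - 1) j (cdiff b d i x) y) (smult ((-1) ^ i) (cmult b c i (j - 1) x (cdiff b d j y)))"
    and cmult_assoc: "x \<in> vec (b i) \<Longrightarrow> y \<in> vec (b j) \<Longrightarrow> z \<in> vec (b l) \<Longrightarrow>
      cmult b c (i + j) l (cmult b c i j x y) z = cmult b c i (j + l) x (cmult b c j l y z)"
begin

lemma hclass_member:
  assumes "hclass b d i C" "z \<in> C"
  shows "z \<in> vec (b i)" "cdiff b d i z = vzero" "C = vadd z ` boundaries b d i"
proof -
  obtain z0 where z0: "z0 \<in> vec (b i)" "cdiff b d i z0 = vzero" "C = vadd z0 ` boundaries b d i"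
    using assms(1) unfolding hclass_def by blast
  obtain w where w: "w \<in> boundaries b d i" "z = vadd z0 w" using assms(2) z0(3) by blast
  then obtain w' where w': "w' \<in> vec (b (Suc i))" "w = cdiff b d (Suc i) w'"
    unfolding boundaries_def by blast
  show "z \<in> vec (b i)" using w z0(1) boundaries_subset_vec by (blast intro: vadd_vec)
  show "cdiff b d i z = vzero" unfolding w(2) w'(2) cdiff_vadd z0(2) cdiff_cdiff[OF w'(1)]
    by (simp add: vadd_def vzero_def)
  have "vadd z0 ` boundaries b d i = vadd z ` boundaries b d i"
  proof (intro equalityI image_subsetI)
    fix u assume "u \<in> boundaries b d i"
    then have "(\<lambda>s. 1 * u s + (-1) * w s) \<in> boundaries b d i" "(\<lambda>s. 1 * u s + 1 * w s) \<in> boundaries b d i"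
      using boundaries_lincomb w(1) by blast+
    moreover have "vadd z0 u = vadd z (\<lambda>s. 1 * u s + (-1) * w s)" "vadd z u = vadd z0 (\<lambda>s. 1 * u s + 1 * w s)"
      using w(2) by (auto simp: vadd_def)
    ultimately show "vadd z0 u \<in> vadd z ` boundaries b d i" "vadd z u \<in> vadd z0 ` boundaries b d i"
      by auto
  qed
  then show "C = vadd z ` boundaries b d i" using z0(3) by simp
qed

lemma tor_cond1_representative:
  assumes "tor_cond1 b d m a" "0 < i" "hclass b d i C"
  shows "\<exists>z\<in>C. z \<in> vec (b i) \<and> cdiff b d i z = vzero \<and> (\<forall>s. z s \<in> ideal_pow m a)"
proof -
  obtain z where z: "z \<in> vec (b i)" "cdiff b d i z = vzero" "C = vadd z ` boundaries b d i"
    using assms(3) unfolding hclass_def by blast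
  then obtain w where w: "w \<in> vec (b (Suc i))" "\<forall>s. z s - cdiff b d (Suc i) w s \<in> ideal_pow m a"
    using assms(1,2) unfolding tor_cond1_def by blast
  have "cdiff b d (Suc i) (smult (-1) w) \<in> boundaries b d i"
    unfolding boundaries_def using smult_vec[OF w(1)] by blast
  moreover have "vadd z (cdiff b d (Suc i) (smult (-1) w)) = (\<lambda>s. z s - cdiff b d (Suc i) w s)"
    unfolding cdiff_smult by (simp add: vadd_def smult_def)
  ultimately have "(\<lambda>s. z s - cdiff b d (Suc i) w s) \<in> C" using z(3) by (metis image_eqI)
  then show ?thesis using w(2) hclass_member(1,2)[OF assms(3)] by blast
qed

lemma smult_cycle_boundary:
  assumes w: "w \<in> vec (b 1)" "cdiff b d 1 w = smult r e"
    and z: "z \<in> vec (b j)" "cdiff b d j z = vzero" "cmult b c 0 j e z = z"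
  shows "smult r z \<in> boundaries b d j"
proof -
  have "cdiff b d (Suc j) (cmult b c 1 j w z) =
      vadd (cmult b c 0 j (cdiff b d 1 w) z) (smult ((-1) ^ 1) (cmult b c 1 (j - 1) w (cdiff b d j z)))"
    using cdiff_cmult[OF w(1) z(1)] by simp
  also have "\<dots> = smult r z"
    unfolding w(2) z(2) cmult_smult_left z(3) cmult_vzero_right by (simp add: vadd_def smult_def vzero_def)
  finally show ?thesis unfolding boundaries_def using cmult_vec[of b c 1 j w z] by (metis image_eqI plus_1_eq_Suc)
qed

end

section \<open>Massey sums\<close>

definition massey_sum :: "(nat \<Rightarrow> nat) \<Rightarrow> (nat \<Rightarrow> nat \<Rightarrow> nat \<Rightarrow> nat \<Rightarrow> nat \<Rightarrow> 'a::comm_ring_1)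
    \<Rightarrow> ((nat \<times> 'c) list \<Rightarrow> nat \<Rightarrow> 'a) \<Rightarrow> (nat \<times> 'c) list \<Rightarrow> nat \<Rightarrow> 'a" where
  "massey_sum b c f hs = (\<lambda>s. \<Sum>i\<in>{1..<length hs}.
     cmult b c (mdeg (take i hs)) (mdeg (drop i hs))
       (smult ((-1) ^ (mdeg (take i hs) + 1)) (f (take i hs))) (f (drop i hs)) s)"

definition defining_system :: "(nat \<Rightarrow> nat) \<Rightarrow> (nat \<Rightarrow> nat \<Rightarrow> nat \<Rightarrow> 'a::comm_ring_1)
    \<Rightarrow> (nat \<Rightarrow> nat \<Rightarrow> nat \<Rightarrow> nat \<Rightarrow> nat \<Rightarrow> 'a) \<Rightarrow> ((nat \<times> 'c) list \<Rightarrow> nat \<Rightarrow> 'a)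
    \<Rightarrow> (nat \<times> 'c) list \<Rightarrow> bool" where
  "defining_system b d c f hs \<longleftrightarrow>
     (\<forall>w. w \<noteq> [] \<and> length w < length hs \<and> set w \<subseteq> set hs \<longrightarrow>
        f w \<in> vec (b (mdeg w)) \<and> cdiff b d (mdeg w) (f w) = massey_sum b c f w)"

definition massey_sign :: "(nat \<times> 'c) list \<Rightarrow> 'a::comm_ring_1" where
  "massey_sign w = (-1) ^ (mdeg w + 1)"

definition massey_triple :: "(nat \<Rightarrow> nat) \<Rightarrow> (nat \<Rightarrow> nat \<Rightarrow> nat \<Rightarrow> nat \<Rightarrow> nat \<Rightarrow> 'a::comm_ring_1)
    \<Rightarrow> ((nat \<times> 'c) list \<Rightarrow> nat \<Rightarrow> 'a) \<Rightarrow> (nat \<times> 'c) list \<Rightarrow> nat \<Rightarrow> nat \<Rightarrow> nat \<Rightarrow> 'a" where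
  "massey_triple b c f hs j l =
     cmult b c (mdeg (take j hs)) (mdeg (drop j (take l hs)) + mdeg (drop l hs)) (f (take j hs))
       (cmult b c (mdeg (drop j (take l hs))) (mdeg (drop l hs)) (f (drop j (take l hs))) (f (drop l hs)))"

lemma massey_sum_cong:
  "(\<And>w. length w < length hs \<Longrightarrow> f w = g w) \<Longrightarrow> massey_sum b c f hs = massey_sum b c g hs"
  unfolding massey_sum_def by (intro ext sum.cong refl) auto

lemma massey_sum_singleton: "massey_sum b c f [h] = vzero"
  by (simp add: massey_sum_def vzero_def)

lemma mdeg_append: "u \<noteq> [] \<Longrightarrow> v \<noteq> [] \<Longrightarrow> mdeg (u @ v) = mdeg u + mdeg v + 1"
  by (cases u; cases v) (auto simp: mdeg_def)

lemma mdeg_take_drop: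
  assumes "0 < i" "i < length hs"
  shows "mdeg hs = mdeg (take i hs) + mdeg (drop i hs) + 1"
proof -
  have "take i hs \<noteq> []" "drop i hs \<noteq> []" using assms by auto
  then show ?thesis using mdeg_append[of "take i hs" "drop i hs"] by simp
qed

text \<open>The two occurrences of a triple product in the boundary of a Massey sum carry opposite signs.\<close>
lemma massey_sign_take_drop:
  assumes "0 < j" "j < l" "l \<le> length hs"
  shows "massey_sign (take l hs) * massey_sign (take j hs) =
    - ((-1) ^ mdeg (take j hs) * massey_sign (take j hs) * massey_sign (drop j (take l hs)) :: 'a::comm_ring_1)"
proof -
  have "mdeg (take l hs) = mdeg (take j hs) + mdeg (drop j (take l hs)) + 1"
    using mdeg_take_drop[of j "take l hs"] assms by (simp add: min_absorb1)
  moreover have "((-1::'a) ^ k) * (-1) ^ k = 1" for k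
    by (simp add: power_mult_distrib[symmetric])
  ultimately show ?thesis by (simp add: massey_sign_def power_add mult.commute mult.left_commute)
qed

lemma defining_systemD:
  assumes "defining_system b d c f hs" "w \<noteq> []" "length w < length hs" "set w \<subseteq> set hs"
  shows "f w \<in> vec (b (mdeg w))" "cdiff b d (mdeg w) (f w) = massey_sum b c f w"
  using assms unfolding defining_system_def by blast+

lemma take_drop_proper:
  assumes "0 < i" "i < length hs"
  shows "take i hs \<noteq> []" "length (take i hs) < length hs" "set (take i hs) \<subseteq> set hs"
    "drop i hs \<noteq> []" "length (drop i hs) < length hs" "set (drop i hs) \<subseteq> set hs"
  using assms by (auto simp: set_take_subset set_drop_subset)

lemma defining_system_take_drop:
  assumes "defining_system b d c f hs" "0 < i" "i < length hs"
  shows "f (take i hs) \<in> vec (b (mdeg (take i hs)))" "f (drop i hs) \<in> vec (b (mdeg (drop i hs)))"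
    "cdiff b d (mdeg (take i hs)) (f (take i hs)) = massey_sum b c f (take i hs)"
    "cdiff b d (mdeg (drop i hs)) (f (drop i hs)) = massey_sum b c f (drop i hs)"
  using defining_systemD[OF assms(1) take_drop_proper(1-3)] defining_systemD[OF assms(1) take_drop_proper(4-6)]
    assms(2,3) by blast+

lemma sum_triangle_swap:
  "(\<Sum>i\<in>{1..<n}. \<Sum>j\<in>{1..<i}. g j i) = (\<Sum>j\<in>{1..<n}. \<Sum>i\<in>{Suc j..<n}. g j i)"
proof -
  have "(\<Sum>i\<in>{1..<n}. \<Sum>j\<in>{j\<in>{1..<n}. j < i}. g j i) = (\<Sum>j\<in>{1..<n}. \<Sum>i\<in>{i\<in>{1..<n}. j < i}. g j i)"
    by (rule sum.swap_restrict) auto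
  moreover have "\<And>i. i \<in> {1..<n} \<Longrightarrow> {j\<in>{1..<n}. j < i} = {1..<i}" by auto
  moreover have "\<And>j. j \<in> {1..<n} \<Longrightarrow> {i\<in>{1..<n}. j < i} = {Suc j..<n}" by auto
  ultimately show ?thesis by (metis (no_types, lifting) sum.cong)
qed

lemma cmult_massey_sum_right:
  assumes i: "0 < i" "i < length hs"
  shows "cmult b c (mdeg (take i hs)) (mdeg (drop i hs) - 1) (f (take i hs)) (massey_sum b c f (drop i hs)) s
    = (\<Sum>l\<in>{Suc i..<length hs}. massey_sign (drop i (take l hs)) * massey_triple b c f hs i l s)"
proof -
  have "cmult b c (mdeg (take i hs)) (mdeg (drop i hs) - 1) (f (take i hs)) (massey_sum b c f (drop i hs)) s
    = (\<Sum>k\<in>{1..<length hs - i}. cmult b c (mdeg (take i hs)) (mdeg (drop i hs) - 1) (f (take i hs))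
        (cmult b c (mdeg (take k (drop i hs))) (mdeg (drop k (drop i hs)))
          (smult ((-1) ^ (mdeg (take k (drop i hs)) + 1)) (f (take k (drop i hs)))) (f (drop k (drop i hs)))) s)"
    unfolding massey_sum_def cmult_sum_right by simp
  also have "\<dots> = (\<Sum>k\<in>{1..<length hs - i}. massey_sign (drop i (take (k + i) hs)) * massey_triple b c f hs i (k + i) s)"
  proof (rule sum.cong[OF refl])
    fix k assume k: "k \<in> {1..<length hs - i}"
    have "mdeg (drop i hs) - 1 = mdeg (take k (drop i hs)) + mdeg (drop k (drop i hs))"
      using mdeg_take_drop[of k "drop i hs"] k by simp
    then show "cmult b c (mdeg (take i hs)) (mdeg (drop i hs) - 1) (f (take i hs))
        (cmult b c (mdeg (take k (drop i hs))) (mdeg (drop k (drop i hs)))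
          (smult ((-1) ^ (mdeg (take k (drop i hs)) + 1)) (f (take k (drop i hs)))) (f (drop k (drop i hs)))) s
        = massey_sign (drop i (take (k + i) hs)) * massey_triple b c f hs i (k + i) s"
      unfolding cmult_smult_left cmult_smult_right take_drop drop_drop
      by (simp add: smult_def massey_sign_def massey_triple_def)
  qed
  also have "\<dots> = (\<Sum>l\<in>{Suc i..<length hs}. massey_sign (drop i (take l hs)) * massey_triple b c f hs i l s)"
    using sum.shift_bounds_nat_ivl[of "\<lambda>l. massey_sign (drop i (take l hs)) * massey_triple b c f hs i l s" 1 i "length hs - i"] i
    by simp
  finally show ?thesis .
qed

lemma massey_sum_vec: "massey_sum b c f hs \<in> vec (b (mdeg hs - 1))"
  unfolding vec_def massey_sum_def
proof (intro CollectI allI impI sum.neutral ballI)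
  fix s i assume "b (mdeg hs - 1) \<le> s" "i \<in> {1..<length hs}"
  then show "cmult b c (mdeg (take i hs)) (mdeg (drop i hs))
      (smult ((-1) ^ (mdeg (take i hs) + 1)) (f (take i hs))) (f (drop i hs)) s = 0"
    using mdeg_take_drop[of i hs] by (simp add: cmult_def)
qed

lemma massey_sum_in_ideal:
  assumes "is_ideal I" "is_ideal J" and IJ: "\<And>x y. x \<in> I \<Longrightarrow> y \<in> I \<Longrightarrow> x * y \<in> J"
    and take: "\<And>i s. 0 < i \<Longrightarrow> i < length hs \<Longrightarrow> f (take i hs) s \<in> I"
    and drop: "\<And>i s. 0 < i \<Longrightarrow> i < length hs \<Longrightarrow> f (drop i hs) s \<in> I"
  shows "massey_sum b c f hs u \<in> J"
  unfolding massey_sum_def cmult_def smult_def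
proof (intro ideal_sum[OF assms(2)], goal_cases)
  case (1 i)
  then have "0 < i" "i < length hs" by auto
  have "c' * ((-1) ^ k * f (take i hs) s) * f (drop i hs) t \<in> J" for c' k s t
  proof -
    have "c' * ((-1) ^ k * f (take i hs) s) \<in> I"
      unfolding mult.assoc[symmetric] by (rule is_idealD(3)[OF assms(1) take[OF \<open>0 < i\<close> \<open>i < length hs\<close>]])
    then show ?thesis using IJ drop[OF \<open>0 < i\<close> \<open>i < length hs\<close>] by blast
  qed
  then show ?case
    by (simp only: split: if_split) (intro conjI impI ideal_sum[OF assms(2)] is_idealD(1)[OF assms(2)])
qed

context dg_algebra
begin

lemma cmult_massey_sum_left:
  assumes f: "defining_system b d c f hs" and i: "0 < i" "i < length hs"
  shows "cmult b c (mdeg (take i hs) - 1) (mdeg (drop i hs)) (massey_sum b c f (take i hs)) (f (drop i hs)) s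
    = (\<Sum>j\<in>{1..<i}. massey_sign (take j hs) * massey_triple b c f hs j i s)"
proof -
  have "cmult b c (mdeg (take i hs) - 1) (mdeg (drop i hs)) (massey_sum b c f (take i hs)) (f (drop i hs)) s
    = (\<Sum>j\<in>{1..<i}. cmult b c (mdeg (take i hs) - 1) (mdeg (drop i hs))
        (cmult b c (mdeg (take j (take i hs))) (mdeg (drop j (take i hs)))
          (smult ((-1) ^ (mdeg (take j (take i hs)) + 1)) (f (take j (take i hs)))) (f (drop j (take i hs))))
        (f (drop i hs)) s)"
    unfolding massey_sum_def cmult_sum_left using i by simp
  also have "\<dots> = (\<Sum>j\<in>{1..<i}. massey_sign (take j hs) * massey_triple b c f hs j i s)"
  proof (rule sum.cong[OF refl])
    fix j assume j: "j \<in> {1..<i}"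
    have tt: "take j (take i hs) = take j hs" using j by (simp add: min_absorb1)
    have md: "mdeg (take i hs) - 1 = mdeg (take j hs) + mdeg (drop j (take i hs))"
      using mdeg_take_drop[of j "take i hs"] j i by (simp add: min_absorb1)
    have "f (drop j (take i hs)) \<in> vec (b (mdeg (drop j (take i hs))))"
      by (rule defining_systemD(1)[OF f]) (use i j in \<open>auto dest: in_set_takeD in_set_dropD\<close>)
    moreover have "f (take j hs) \<in> vec (b (mdeg (take j hs)))" "f (drop i hs) \<in> vec (b (mdeg (drop i hs)))"
      using defining_system_take_drop(1)[OF f, of j] defining_system_take_drop(2)[OF f i] i j by auto
    ultimately show "cmult b c (mdeg (take i hs) - 1) (mdeg (drop i hs))
        (cmult b c (mdeg (take j (take i hs))) (mdeg (drop j (take i hs)))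
          (smult ((-1) ^ (mdeg (take j (take i hs)) + 1)) (f (take j (take i hs)))) (f (drop j (take i hs))))
        (f (drop i hs)) s = massey_sign (take j hs) * massey_triple b c f hs j i s"
      unfolding tt md cmult_smult_left by (simp add: smult_def massey_sign_def massey_triple_def cmult_assoc)
  qed
  finally show ?thesis .
qed

lemma cdiff_massey_sum:
  assumes f: "defining_system b d c f hs" and n: "length hs = n"
  shows "cdiff b d (mdeg hs - 1) (massey_sum b c f hs) s =
    (\<Sum>i\<in>{1..<n}. massey_sign (take i hs) * (\<Sum>j\<in>{1..<i}. massey_sign (take j hs) * massey_triple b c f hs j i s)
      + (-1) ^ mdeg (take i hs) * (massey_sign (take i hs) *
          (\<Sum>l\<in>{Suc i..<n}. massey_sign (drop i (take l hs)) * massey_triple b c f hs i l s)))"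
  unfolding massey_sum_def cdiff_sum n
proof (rule sum.cong[OF refl])
  fix i assume i: "i \<in> {1..<n}"
  have md: "mdeg hs - 1 = mdeg (take i hs) + mdeg (drop i hs)"
    using mdeg_take_drop[of i hs] i n by simp
  have "0 < i" "i < length hs" using i n by auto
  note v = defining_system_take_drop(1,2)[OF f this] and dv = defining_system_take_drop(3,4)[OF f this]
  show "cdiff b d (mdeg hs - 1) (cmult b c (mdeg (take i hs)) (mdeg (drop i hs))
      (smult ((-1) ^ (mdeg (take i hs) + 1)) (f (take i hs))) (f (drop i hs))) s =
    massey_sign (take i hs) * (\<Sum>j\<in>{1..<i}. massey_sign (take j hs) * massey_triple b c f hs j i s)
      + (-1) ^ mdeg (take i hs) * (massey_sign (take i hs) *
          (\<Sum>l\<in>{Suc i..<n}. massey_sign (drop i (take l hs)) * massey_triple b c f hs i l s))"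
    unfolding md cmult_smult_left cdiff_smult cdiff_cmult[OF v] dv
    using cmult_massey_sum_left[OF f, of i s] cmult_massey_sum_right[of i hs b c f s] i n
    by (simp add: vadd_def smult_def massey_sign_def algebra_simps)
qed

lemma massey_sum_cycle:
  assumes f: "defining_system b d c f hs"
  shows "cdiff b d (mdeg hs - 1) (massey_sum b c f hs) = vzero"
proof
  fix s
  define n where "n = length hs"
  define T where "T = massey_triple b c f hs"
  have "cdiff b d (mdeg hs - 1) (massey_sum b c f hs) s =
      (\<Sum>i\<in>{1..<n}. \<Sum>j\<in>{1..<i}. massey_sign (take i hs) * massey_sign (take j hs) * T j i s)
    + (\<Sum>i\<in>{1..<n}. \<Sum>l\<in>{Suc i..<n}.
        (-1) ^ mdeg (take i hs) * massey_sign (take i hs) * massey_sign (drop i (take l hs)) * T i l s)"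
    unfolding cdiff_massey_sum[OF f n_def[symmetric]] sum.distrib sum_distrib_left T_def
    by (simp add: mult.assoc)
  also have "\<dots> = (\<Sum>j\<in>{1..<n}. \<Sum>l\<in>{Suc j..<n}.
      (massey_sign (take l hs) * massey_sign (take j hs)
        + (-1) ^ mdeg (take j hs) * massey_sign (take j hs) * massey_sign (drop j (take l hs))) * T j l s)"
    unfolding sum_triangle_swap sum.distrib[symmetric] by (simp add: distrib_right)
  also have "\<dots> = 0"
    unfolding n_def by (intro sum.neutral ballI) (auto simp: massey_sign_take_drop)
  finally show "cdiff b d (mdeg hs - 1) (massey_sum b c f hs) s = vzero s" by (simp add: vzero_def)
qed

end

section \<open>Trivial Massey operations with values in an ideal\<close>

text \<open>For a one-element list the Massey sum vanishes, so the condition asks for a cycle in the given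
  class.\<close>
definition massey_candidate :: "(nat \<Rightarrow> nat) \<Rightarrow> (nat \<Rightarrow> nat \<Rightarrow> nat \<Rightarrow> 'a::comm_ring_1)
    \<Rightarrow> (nat \<Rightarrow> nat \<Rightarrow> nat \<Rightarrow> nat \<Rightarrow> nat \<Rightarrow> 'a) \<Rightarrow> 'a set
    \<Rightarrow> ((nat \<times> (nat \<Rightarrow> 'a) set) list \<Rightarrow> nat \<Rightarrow> 'a) \<Rightarrow> (nat \<times> (nat \<Rightarrow> 'a) set) list \<Rightarrow> (nat \<Rightarrow> 'a) \<Rightarrow> bool"
  where
  "massey_candidate b d c I f hs w \<longleftrightarrow>
     w \<in> vec (b (mdeg hs)) \<and> (\<forall>s. w s \<in> I) \<and> cdiff b d (mdeg hs) w = massey_sum b c f hs \<and>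
     (length hs = 1 \<longrightarrow> w \<in> snd (hd hs))"

context dg_algebra
begin

context
  fixes I J :: "'a set" and H :: "(nat \<times> (nat \<Rightarrow> 'a) set) set"
  assumes I: "is_ideal I" and J: "is_ideal J" and IJ: "\<And>x y. x \<in> I \<Longrightarrow> y \<in> I \<Longrightarrow> x * y \<in> J"
    and rep: "\<And>h. h \<in> H \<Longrightarrow> \<exists>z\<in>snd h. z \<in> vec (b (fst h)) \<and> cdiff b d (fst h) z = vzero \<and> (\<forall>s. z s \<in> I)"
    and lift: "\<And>i z. z \<in> vec (b i) \<Longrightarrow> cdiff b d i z = vzero \<Longrightarrow> \<forall>s. z s \<in> J \<Longrightarrow>
      \<exists>w\<in>vec (b (Suc i)). (\<forall>s. w s \<in> I) \<and> cdiff b d (Suc i) w = z"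
begin

lemma massey_candidate_exists:
  assumes hs: "hs \<noteq> []" "set hs \<subseteq> H"
    and f: "\<And>w. w \<noteq> [] \<Longrightarrow> length w < length hs \<Longrightarrow> set w \<subseteq> set hs \<Longrightarrow> massey_candidate b d c I f w (f w)"
  shows "\<exists>w. massey_candidate b d c I f hs w"
proof (cases "length hs = 1")
  case True
  then obtain h where "hs = [h]" by (cases hs) auto
  moreover obtain z where "z \<in> snd h" "z \<in> vec (b (fst h))" "cdiff b d (fst h) z = vzero" "\<forall>s. z s \<in> I"
    using rep[of h] hs(2) \<open>hs = [h]\<close> by auto
  ultimately have "massey_candidate b d c I f hs z"
    by (simp add: massey_candidate_def massey_sum_singleton mdeg_def)
  then show ?thesis by blast
next
  case False
  then have "mdeg hs = Suc (mdeg hs - 1)" using hs(1) by (cases hs) (auto simp: mdeg_def)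
  have "defining_system b d c f hs"
    using f by (auto simp: defining_system_def massey_candidate_def)
  moreover have "massey_sum b c f hs u \<in> J" for u
    using f[OF take_drop_proper(1-3)] f[OF take_drop_proper(4-6)]
    by (intro massey_sum_in_ideal[OF I J IJ]) (auto simp: massey_candidate_def)
  ultimately obtain w where "w \<in> vec (b (mdeg hs))" "\<forall>s. w s \<in> I" "cdiff b d (mdeg hs) w = massey_sum b c f hs"
    using lift[OF massey_sum_vec massey_sum_cycle] \<open>mdeg hs = Suc (mdeg hs - 1)\<close> by metis
  then have "massey_candidate b d c I f hs w"
    using False by (simp add: massey_candidate_def)
  then show ?thesis by blast
qed

lemma massey_candidates_exist:
  "\<exists>\<mu>. \<forall>hs. hs \<noteq> [] \<and> set hs \<subseteq> H \<longrightarrow> massey_candidate b d c I \<mu> hs (\<mu> hs)"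
proof -
  define G where "G f hs = (SOME w. massey_candidate b d c I f hs w)" for f hs
  define \<mu> where "\<mu> = wfrec (measure length) G"
  have "adm_wf (measure length) G"
  proof (unfold adm_wf_def, intro allI impI)
    fix f g :: "(nat \<times> (nat \<Rightarrow> 'a) set) list \<Rightarrow> nat \<Rightarrow> 'a" and hs
    assume "\<forall>w. (w, hs) \<in> measure length \<longrightarrow> f w = g w"
    then have "massey_sum b c f hs = massey_sum b c g hs" by (intro massey_sum_cong) simp
    then show "G f hs = G g hs" by (simp add: G_def massey_candidate_def)
  qed
  then have "\<mu> = G \<mu>"
    unfolding \<mu>_def by (rule wfrec_fixpoint[OF wf_measure])
  then have \<mu>: "\<mu> hs = G \<mu> hs" for hs
    by (rule fun_cong)
  have "massey_candidate b d c I \<mu> hs (\<mu> hs)" if "hs \<noteq> []" "set hs \<subseteq> H" for hs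
    using that
  proof (induction "length hs" arbitrary: hs rule: less_induct)
    case less
    have "\<exists>w. massey_candidate b d c I \<mu> hs w"
      by (rule massey_candidate_exists[OF less.prems]) (use less in \<open>auto\<close>)
    then show ?case unfolding \<mu>[of hs] G_def by (rule someI_ex)
  qed
  then show ?thesis by blast
qed

theorem trivial_massey_exists:
  assumes "I \<subseteq> m"
  shows "\<exists>\<mu>. trivial_massey b d c m H \<mu> \<and> (\<forall>hs. hs \<noteq> [] \<and> set hs \<subseteq> H \<longrightarrow> (\<forall>s. \<mu> hs s \<in> I))"
proof -
  obtain \<mu> where cand: "\<And>hs. hs \<noteq> [] \<Longrightarrow> set hs \<subseteq> H \<Longrightarrow> massey_candidate b d c I \<mu> hs (\<mu> hs)"
    using massey_candidates_exist by blast
  have "trivial_massey b d c m H \<mu>"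
    unfolding trivial_massey_def
  proof (intro conjI allI ballI impI)
    fix hs assume "hs \<noteq> [] \<and> set hs \<subseteq> H"
    then show "\<mu> hs \<in> vec (b (mdeg hs))" "\<mu> hs s \<in> m" for s
      using cand[of hs] assms by (auto simp: massey_candidate_def)
  next
    fix h assume "h \<in> H"
    then show "\<mu> [h] \<in> snd h" using cand[of "[h]"] by (simp add: massey_candidate_def)
  next
    fix hs :: "(nat \<times> (nat \<Rightarrow> 'a) set) list" assume "2 \<le> length hs \<and> set hs \<subseteq> H"
    then have "massey_candidate b d c I \<mu> hs (\<mu> hs)" using cand[of hs] by force
    then show "cdiff b d (mdeg hs) (\<mu> hs) = (\<lambda>s. \<Sum>i\<in>{1..<length hs}.
        cmult b c (mdeg (take i hs)) (mdeg (drop i hs))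
          (smult ((-1) ^ (mdeg (take i hs) + 1)) (\<mu> (take i hs))) (\<mu> (drop i hs)) s)"
      by (simp add: massey_candidate_def massey_sum_def)
  qed
  then show ?thesis using cand by (auto simp: massey_candidate_def)
qed

end

end

section \<open>Homogeneous bases of homology\<close>

definition homology_independent :: "(nat \<Rightarrow> nat) \<Rightarrow> (nat \<Rightarrow> nat \<Rightarrow> nat \<Rightarrow> 'a::comm_ring_1) \<Rightarrow> 'a set
    \<Rightarrow> (nat \<times> (nat \<Rightarrow> 'a) set) set \<Rightarrow> bool" where
  "homology_independent b d m S \<longleftrightarrow>
     (\<forall>i F r zs. finite F \<and> F \<subseteq> {h\<in>S. fst h = i} \<and> (\<forall>h\<in>F. zs h \<in> snd h) \<and>
        (\<lambda>s. \<Sum>h\<in>F. r h * zs h s) \<in> boundaries b d i \<longrightarrow> (\<forall>h\<in>F. r h \<in> m))"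

definition homology_span :: "(nat \<Rightarrow> nat) \<Rightarrow> (nat \<Rightarrow> nat \<Rightarrow> nat \<Rightarrow> 'a::comm_ring_1)
    \<Rightarrow> (nat \<times> (nat \<Rightarrow> 'a) set) set \<Rightarrow> nat \<Rightarrow> (nat \<Rightarrow> 'a) \<Rightarrow> bool" where
  "homology_span b d S i z \<longleftrightarrow>
     (\<exists>F r zs. finite F \<and> F \<subseteq> {h\<in>S. fst h = i} \<and> (\<forall>h\<in>F. zs h \<in> snd h) \<and>
        vsub z (\<lambda>s. \<Sum>h\<in>F. r h * zs h s) \<in> boundaries b d i)"

lemma homology_independentD:
  assumes "homology_independent b d m S" "finite F" "F \<subseteq> {h\<in>S. fst h = i}" "\<forall>h\<in>F. zs h \<in> snd h"
    "(\<lambda>s. \<Sum>h\<in>F. r h * zs h s) \<in> boundaries b d i" "h \<in> F"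
  shows "r h \<in> m"
  using assms unfolding homology_independent_def by blast

lemma homology_independent_Union_chain:
  assumes "subset.chain {S. homology_independent b d m S} C"
  shows "homology_independent b d m (\<Union>C)"
  unfolding homology_independent_def
proof (intro allI impI ballI)
  fix i F r zs h
  assume F: "finite F \<and> F \<subseteq> {h\<in>\<Union>C. fst h = i} \<and> (\<forall>h\<in>F. zs h \<in> snd h) \<and>
    (\<lambda>s. \<Sum>h\<in>F. r h * zs h s) \<in> boundaries b d i" and h: "h \<in> F"
  then have fin: "finite F" and sub: "F \<subseteq> {h\<in>\<Union>C. fst h = i}" by simp_all
  then have "F \<subseteq> \<Union>C" "C \<noteq> {}" using h by blast+
  then obtain S where S: "S \<in> C" "F \<subseteq> S"
    by (rule finite_subset_Union_chain[OF fin _ _ assms])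
  have "homology_independent b d m S" using S(1) assms unfolding subset_chain_def by blast
  moreover have "F \<subseteq> {h\<in>S. fst h = i}" using sub S(2) by blast
  ultimately show "r h \<in> m" using homology_independentD[of b d m S F i zs r h] F h by blast
qed

context dg_algebra
begin

context
  fixes m :: "'a set"
  assumes maximal: "maximal_ideal m"
    and annihilates: "\<And>r i z. r \<in> m \<Longrightarrow> z \<in> vec (b i) \<Longrightarrow> cdiff b d i z = vzero \<Longrightarrow>
      smult r z \<in> boundaries b d i"
begin

text \<open>A relation with a unit coefficient modulo \<open>m\<close> can be solved for \<open>z\<close>, since \<open>m\<close> kills homology.\<close>
lemma homology_span_of_unit_relation:
  assumes "r0 \<notin> m" "z0 \<in> vadd z ` boundaries b d i" "hclass b d i (vadd z ` boundaries b d i)"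
    and F: "finite F" "F \<subseteq> {h\<in>S. fst h = i}" "\<forall>h\<in>F. zs h \<in> snd h"
    and rel: "(\<lambda>s. r0 * z0 s + (\<Sum>h\<in>F. r h * zs h s)) \<in> boundaries b d i"
  shows "homology_span b d S i z"
proof -
  obtain q where q: "q * r0 - 1 \<in> m" using maximal_ideal_inverse_mod[OF maximal assms(1)] by blast
  have "smult (q * r0 - 1) z0 \<in> boundaries b d i"
    using annihilates[OF q] hclass_member[OF assms(3,2)] by blast
  moreover obtain u where u: "u \<in> boundaries b d i" "z0 = vadd z u" using assms(2) by blast
  ultimately have "(\<lambda>s. (-1) * u s + (-1) * smult (q * r0 - 1) z0 s) \<in> boundaries b d i"
    by (intro boundaries_lincomb)
  then have "(\<lambda>s. q * (r0 * z0 s + (\<Sum>h\<in>F. r h * zs h s)) + 1 * ((-1) * u s + (-1) * smult (q * r0 - 1) z0 s))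
      \<in> boundaries b d i"
    using boundaries_lincomb[OF rel] by blast
  moreover have "(\<lambda>s. q * (r0 * z0 s + (\<Sum>h\<in>F. r h * zs h s)) + 1 * ((-1) * u s + (-1) * smult (q * r0 - 1) z0 s))
      = vsub z (\<lambda>s. \<Sum>h\<in>F. (- q * r h) * zs h s)"
  proof
    fix s
    have "(\<Sum>h\<in>F. (- q * r h) * zs h s) = - (q * (\<Sum>h\<in>F. r h * zs h s))"
      by (simp add: sum_distrib_left sum_negf mult.assoc)
    then show "q * (r0 * z0 s + (\<Sum>h\<in>F. r h * zs h s)) + 1 * ((-1) * u s + (-1) * smult (q * r0 - 1) z0 s)
        = vsub z (\<lambda>s. \<Sum>h\<in>F. (- q * r h) * zs h s) s"
      using u(2) by (simp add: vsub_def vadd_def smult_def algebra_simps)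
  qed
  ultimately show ?thesis
    unfolding homology_span_def using F by (intro exI[of _ F] exI[of _ "\<lambda>h. - q * r h"] exI[of _ zs]) simp
qed

lemma homology_independent_insert:
  assumes S: "homology_independent b d m S" and z: "z \<in> vec (b i)" "cdiff b d i z = vzero"
    and not_span: "\<not> homology_span b d S i z"
  shows "homology_independent b d m (insert (i, vadd z ` boundaries b d i) S)"
  unfolding homology_independent_def
proof (intro allI impI ballI)
  define C0 where "C0 = vadd z ` boundaries b d i"
  have C0: "hclass b d i C0" using z unfolding C0_def hclass_def by auto
  fix i' F r zs h
  assume F: "finite F \<and> F \<subseteq> {h \<in> insert (i, vadd z ` boundaries b d i) S. fst h = i'} \<and>
    (\<forall>h\<in>F. zs h \<in> snd h) \<and> (\<lambda>s. \<Sum>h\<in>F. r h * zs h s) \<in> boundaries b d i'" and "h \<in> F"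
  show "r h \<in> m"
  proof (cases "(i, C0) \<in> F")
    case False
    then have "F \<subseteq> {h\<in>S. fst h = i'}" using F by (auto simp: C0_def)
    then show ?thesis using homology_independentD[OF S] F \<open>h \<in> F\<close> by blast
  next
    case True
    define F' where "F' = F - {(i, C0)}"
    have "i' = i" using True F by auto
    have F': "finite F'" "F' \<subseteq> {h\<in>S. fst h = i}" "\<forall>h\<in>F'. zs h \<in> snd h"
      using F \<open>i' = i\<close> by (auto simp: F'_def C0_def)
    have "(\<lambda>s. \<Sum>h\<in>F. r h * zs h s) = (\<lambda>s. r (i, C0) * zs (i, C0) s + (\<Sum>h\<in>F'. r h * zs h s))"
      using F True by (simp add: F'_def sum.remove)
    then have rel: "(\<lambda>s. r (i, C0) * zs (i, C0) s + (\<Sum>h\<in>F'. r h * zs h s)) \<in> boundaries b d i"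
      using F \<open>i' = i\<close> by simp
    have zs0: "zs (i, C0) \<in> C0" using F True by fastforce
    have r0: "r (i, C0) \<in> m"
    proof (rule ccontr)
      assume "r (i, C0) \<notin> m"
      then have "homology_span b d S i z"
        using homology_span_of_unit_relation[OF _ _ _ F' rel] zs0 C0 unfolding C0_def by blast
      then show False using not_span by contradiction
    qed
    have "smult (r (i, C0)) (zs (i, C0)) \<in> boundaries b d i"
      by (rule annihilates[OF r0 hclass_member(1,2)[OF C0 zs0]])
    then have "(\<lambda>s. 1 * (r (i, C0) * zs (i, C0) s + (\<Sum>h\<in>F'. r h * zs h s)) + (-1) * smult (r (i, C0)) (zs (i, C0)) s)
        \<in> boundaries b d i"
      by (rule boundaries_lincomb[OF rel])
    then have "(\<lambda>s. \<Sum>h\<in>F'. r h * zs h s) \<in> boundaries b d i" by (simp add: smult_def)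
    then have "\<forall>h\<in>F'. r h \<in> m" using homology_independentD[OF S F'] by blast
    then show ?thesis using r0 \<open>h \<in> F\<close> by (cases "h = (i, C0)") (auto simp: F'_def)
  qed
qed

lemma hbasis_exists: "\<exists>H. hbasis b d m H"
proof -
  define A where "A = {S. S \<subseteq> {h. 1 \<le> fst h \<and> hclass b d (fst h) (snd h)} \<and> homology_independent b d m S}"
  have "\<exists>S\<in>A. \<forall>X\<in>A. S \<subseteq> X \<longrightarrow> X = S"
  proof (rule subset_Zorn')
    fix C assume C: "subset.chain A C"
    then have "subset.chain {S. homology_independent b d m S} C"
      unfolding A_def subset_chain_def by blast
    then have "homology_independent b d m (\<Union>C)" by (rule homology_independent_Union_chain)
    moreover have "\<Union>C \<subseteq> {h. 1 \<le> fst h \<and> hclass b d (fst h) (snd h)}"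
      using C unfolding A_def subset_chain_def by blast
    ultimately show "\<Union>C \<in> A" unfolding A_def by blast
  qed
  then obtain S where S: "S \<in> A" "\<And>X. X \<in> A \<Longrightarrow> S \<subseteq> X \<Longrightarrow> X = S" by blast
  have S_sub: "S \<subseteq> {h. 1 \<le> fst h \<and> hclass b d (fst h) (snd h)}"
    and S_indep: "homology_independent b d m S" using S(1) unfolding A_def by auto
  have span: "homology_span b d S i z" if "1 \<le> i" "z \<in> vec (b i)" "cdiff b d i z = vzero" for i z
  proof (rule ccontr)
    assume not_span: "\<not> homology_span b d S i z"
    define h0 where "h0 = (i, vadd z ` boundaries b d i)"
    have "hclass b d i (snd h0)" using that(2,3) unfolding h0_def hclass_def by auto
    then have "insert h0 S \<in> A"
      using S_sub that(1) homology_independent_insert[OF S_indep that(2,3) not_span]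
      unfolding A_def h0_def by auto
    then have "h0 \<in> S" using S(2) by blast
    moreover have "z \<in> snd h0"
      using vzero_boundary unfolding h0_def by (force simp: vadd_def vzero_def)
    moreover have "vsub z (\<lambda>s. \<Sum>h\<in>{h0}. 1 * z s) \<in> boundaries b d i"
      using vzero_boundary by (simp add: vsub_def vzero_def)
    ultimately have "homology_span b d S i z"
      unfolding homology_span_def
      by (intro exI[of _ "{h0}"] exI[of _ "\<lambda>_. 1"] exI[of _ "\<lambda>_. z"]) (simp add: h0_def)
    then show False using not_span by contradiction
  qed
  have "hbasis b d m S"
    unfolding hbasis_def homology_independent_def[symmetric] homology_span_def[symmetric]
    using S_sub S_indep span by blast
  then show ?thesis ..
qed

end

end

section \<open>The DG algebra \<open>A = D \<otimes>\<^sub>P R\<close>\<close>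

lemma min_dga_resolutionD:
  assumes "min_dga_resolution p b d c"
  shows "b 0 = 1" "{cdiff b d 1 w 0 | w. w \<in> vec (b 1)} = p"
    "\<exists>e\<in>vec (b 0). \<forall>j. \<forall>y\<in>vec (b j). cmult b c 0 j e y = y \<and> cmult b c j 0 y e = y"
  using assms unfolding min_dga_resolution_def by blast+

lemma min_dga_resolution_dg_algebra:
  assumes "min_dga_resolution p b d c"
  shows "dg_algebra b d c"
proof -
  note D = assms[unfolded min_dga_resolution_def]
  have "\<forall>i. \<forall>v\<in>vec (b (Suc i)). cdiff b d i (cdiff b d (Suc i) v) = vzero"
    using D by (elim conjE)
  moreover have "\<forall>i j. \<forall>x\<in>vec (b i). \<forall>y\<in>vec (b j). cdiff b d (i + j) (cmult b c i j x y) =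
      vadd (cmult b c (i - 1) j (cdiff b d i x) y) (smult ((-1) ^ i) (cmult b c i (j - 1) x (cdiff b d j y)))"
    using D by (elim conjE)
  moreover have "\<forall>i j l. \<forall>x\<in>vec (b i). \<forall>y\<in>vec (b j). \<forall>z\<in>vec (b l).
      cmult b c (i + j) l (cmult b c i j x y) z = cmult b c i (j + l) x (cmult b c j l y z)"
    using D by (elim conjE)
  ultimately show ?thesis by unfold_locales blast+
qed

lemma dg_algebra_base_change:
  assumes D: "dg_algebra b d c" and hom: "ring_hom f" and surj: "surj f"
  shows "dg_algebra b (\<lambda>i s t. f (d i s t)) (\<lambda>i j s t u. f (c i j s t u))"
proof
  note lift = surj_zero_preserving_lift[OF surj ring_hom_zero[OF hom]]
  note simps = ring_hom_cdiff[OF hom] ring_hom_cmult[OF hom] ring_hom_vadd[OF hom] ring_hom_smult[OF hom]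
    ring_hom_vzero[OF hom] ring_hom_minus_one_power[OF hom]
  fix i j l :: nat and x y z :: "nat \<Rightarrow> 'b"
  show "cdiff b (\<lambda>i s t. f (d i s t)) i (cdiff b (\<lambda>i s t. f (d i s t)) (Suc i) x) = vzero"
    if x: "x \<in> vec (b (Suc i))"
  proof -
    obtain x' where x': "x' \<in> vec (b (Suc i))" "x = (\<lambda>s. f (x' s))" using lift[OF x] by metis
    have "(\<lambda>s. f (cdiff b d i (cdiff b d (Suc i) x') s)) = (\<lambda>s. f (vzero s))"
      using dg_algebra.cdiff_cdiff[OF D x'(1)] by simp
    then show ?thesis by (simp only: simps x'(2))
  qed
  show "cdiff b (\<lambda>i s t. f (d i s t)) (i + j) (cmult b (\<lambda>i j s t u. f (c i j s t u)) i j x y) =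
      vadd (cmult b (\<lambda>i j s t u. f (c i j s t u)) (i - 1) j (cdiff b (\<lambda>i s t. f (d i s t)) i x) y)
        (smult ((-1) ^ i) (cmult b (\<lambda>i j s t u. f (c i j s t u)) i (j - 1) x (cdiff b (\<lambda>i s t. f (d i s t)) j y)))"
    if xy: "x \<in> vec (b i)" "y \<in> vec (b j)"
  proof -
    obtain x' y' where x': "x' \<in> vec (b i)" "x = (\<lambda>s. f (x' s))" and y': "y' \<in> vec (b j)" "y = (\<lambda>s. f (y' s))"
      using lift[OF xy(1)] lift[OF xy(2)] by metis
    have "(\<lambda>s. f (cdiff b d (i + j) (cmult b c i j x' y') s)) = (\<lambda>s. f (vadd (cmult b c (i - 1) j (cdiff b d i x') y')
        (smult ((-1) ^ i) (cmult b c i (j - 1) x' (cdiff b d j y'))) s))"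
      using dg_algebra.cdiff_cmult[OF D x'(1) y'(1)] by simp
    then show ?thesis by (simp only: simps x'(2) y'(2))
  qed
  show "cmult b (\<lambda>i j s t u. f (c i j s t u)) (i + j) l (cmult b (\<lambda>i j s t u. f (c i j s t u)) i j x y) z =
      cmult b (\<lambda>i j s t u. f (c i j s t u)) i (j + l) x (cmult b (\<lambda>i j s t u. f (c i j s t u)) j l y z)"
    if xyz: "x \<in> vec (b i)" "y \<in> vec (b j)" "z \<in> vec (b l)"
  proof -
    obtain x' y' z' where x': "x' \<in> vec (b i)" "x = (\<lambda>s. f (x' s))" and y': "y' \<in> vec (b j)" "y = (\<lambda>s. f (y' s))"
      and z': "z' \<in> vec (b l)" "z = (\<lambda>s. f (z' s))"
      using lift[OF xyz(1)] lift[OF xyz(2)] lift[OF xyz(3)] by metis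
    have "(\<lambda>s. f (cmult b c (i + j) l (cmult b c i j x' y') z' s)) =
        (\<lambda>s. f (cmult b c i (j + l) x' (cmult b c j l y' z') s))"
      using dg_algebra.cmult_assoc[OF D x'(1) y'(1) z'(1)] by simp
    then show ?thesis by (simp only: simps x'(2) y'(2) z'(2))
  qed
qed

lemma min_dga_resolution_unit_boundary:
  assumes D: "min_dga_resolution p b d c" and "x \<in> p"
  obtains e w where "e \<in> vec (b 0)" "\<And>j y. y \<in> vec (b j) \<Longrightarrow> cmult b c 0 j e y = y"
    "w \<in> vec (b 1)" "cdiff b d 1 w = smult x e"
proof -
  obtain e where "e \<in> vec (b 0)"
    and "\<forall>j. \<forall>y\<in>vec (b j). cmult b c 0 j e y = y \<and> cmult b c j 0 y e = y"
    using min_dga_resolutionD(3)[OF D] by (elim bexE)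
  then have e: "e \<in> vec (b 0)" "\<And>j y. y \<in> vec (b j) \<Longrightarrow> cmult b c 0 j e y = y" by simp_all
  have "x \<in> {cdiff b d 1 w 0 | w. w \<in> vec (b 1)}"
    using min_dga_resolutionD(2)[OF D] \<open>x \<in> p\<close> by simp
  then obtain w where w: "w \<in> vec (b 1)" "cdiff b d 1 w 0 = x" by blast
  have "cdiff b d 1 (smult (e 0) w) = smult x e"
  proof
    fix s
    show "cdiff b d 1 (smult (e 0) w) s = smult x e s"
    proof (cases "s = 0")
      case True
      then show ?thesis unfolding cdiff_smult using w(2) by (simp add: smult_def mult.commute)
    next
      case False
      then have "b 0 \<le> s" using min_dga_resolutionD(1)[OF D] by simp
      then show ?thesis using e(1) by (simp add: cdiff_def smult_def vec_def)
    qed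
  qed
  with e smult_vec[OF w(1)] show thesis by (rule that)
qed

lemma surj_ring_hom_preimage:
  assumes hom: "ring_hom f" and surj: "surj f" and P: "maximal_ideal p" and M: "maximal_ideal m"
    and local_hom: "f ` p \<subseteq> m" and "r \<in> m"
  shows "\<exists>x\<in>p. f x = r"
proof -
  let ?J = "{y. f y \<in> m}"
  have "is_ideal ?J"
    using is_idealD[OF maximal_idealD(1)[OF M]] hom by (auto simp: is_ideal_def ring_hom_def ring_hom_zero)
  moreover have "p \<subseteq> ?J" "1 \<notin> ?J" using local_hom maximal_idealD(2)[OF M] hom by (auto simp: ring_hom_def)
  ultimately have "?J = p" using P unfolding maximal_ideal_def by blast
  then show ?thesis using surj \<open>r \<in> m\<close> by (metis mem_Collect_eq surjD)
qed

text \<open>Each \<open>r \<in> m\<close> lifts to some \<open>x \<in> p = \<partial>(D\<^sub>1)\<close>; if \<open>\<partial> w = x\<close>, then \<open>\<partial>(w z) = r z\<close> for every cycle \<open>z\<close> of \<open>A\<close>.\<close>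
lemma base_change_annihilates_homology:
  assumes hom: "ring_hom f" and surj: "surj f" and P: "maximal_ideal p" and M: "maximal_ideal m"
    and local_hom: "f ` p \<subseteq> m" and D: "min_dga_resolution p b d c"
    and "r \<in> m" and z: "z \<in> vec (b j)" "cdiff b (\<lambda>i s t. f (d i s t)) j z = vzero"
  shows "smult r z \<in> boundaries b (\<lambda>i s t. f (d i s t)) j"
proof -
  interpret A: dg_algebra b "\<lambda>i s t. f (d i s t)" "\<lambda>i j s t u. f (c i j s t u)"
    by (rule dg_algebra_base_change[OF min_dga_resolution_dg_algebra[OF D] hom surj])
  obtain x where "x \<in> p" "f x = r" using surj_ring_hom_preimage[OF hom surj P M local_hom \<open>r \<in> m\<close>] by blast
  then obtain e w where e: "e \<in> vec (b 0)" "\<And>j y. y \<in> vec (b j) \<Longrightarrow> cmult b c 0 j e y = y"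
    and w: "w \<in> vec (b 1)" "cdiff b d 1 w = smult x e"
    using min_dga_resolution_unit_boundary[OF D] by metis
  obtain z' where z': "z' \<in> vec (b j)" "z = (\<lambda>s. f (z' s))"
    using surj_zero_preserving_lift[OF surj ring_hom_zero[OF hom] z(1)] by metis
  have "(\<lambda>s. f (w s)) \<in> vec (b 1)" using w(1) ring_hom_zero[OF hom] by (simp add: vec_def)
  moreover have "cdiff b (\<lambda>i s t. f (d i s t)) 1 (\<lambda>s. f (w s)) = smult r (\<lambda>s. f (e s))"
    using arg_cong[OF w(2), of "\<lambda>v s. f (v s)"] \<open>f x = r\<close> by (simp add: ring_hom_cdiff[OF hom] ring_hom_smult[OF hom])
  moreover have "cmult b (\<lambda>i j s t u. f (c i j s t u)) 0 j (\<lambda>s. f (e s)) z = z"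
    using arg_cong[OF e(2)[OF z'(1)], of "\<lambda>v s. f (v s)"] z'(2) by (simp add: ring_hom_cmult[OF hom])
  ultimately show ?thesis using A.smult_cycle_boundary z by blast
qed

theorem lemma1p2:
  fixes \<kappa> :: "'p::comm_ring_1 \<Rightarrow> 'r::comm_ring_1"
    and p :: "'p set" and m :: "'r set"
    and b :: "nat \<Rightarrow> nat"
    and d :: "nat \<Rightarrow> nat \<Rightarrow> nat \<Rightarrow> 'p"
    and c :: "nat \<Rightarrow> nat \<Rightarrow> nat \<Rightarrow> nat \<Rightarrow> nat \<Rightarrow> 'p"
    and a :: nat
  assumes P_local: "local_ring p"
    and R_local: "local_ring m"
    and hom: "ring_hom \<kappa>"
    and surj: "surj \<kappa>"
    and local_hom: "\<kappa> ` p \<subseteq> m"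
    and D: "min_dga_resolution p b d c"
    and a_pos: "a > 0"
    and cond1: "tor_cond1 b (\<lambda>i s t. \<kappa> (d i s t)) m a"
    and cond2: "tor_cond2 b (\<lambda>i s t. \<kappa> (d i s t)) m a"
  shows "golod b (\<lambda>i s t. \<kappa> (d i s t)) (\<lambda>i j s t u. \<kappa> (c i j s t u)) m \<and>
    (\<forall>H. hbasis b (\<lambda>i s t. \<kappa> (d i s t)) m H \<longrightarrow>
      (\<exists>\<mu>. trivial_massey b (\<lambda>i s t. \<kappa> (d i s t)) (\<lambda>i j s t u. \<kappa> (c i j s t u)) m H \<mu> \<and>
           (\<forall>hs. hs \<noteq> [] \<and> set hs \<subseteq> H \<longrightarrow> (\<forall>s. \<mu> hs s \<in> ideal_pow m a))))"
proof -
  interpret A: dg_algebra b "\<lambda>i s t. \<kappa> (d i s t)" "\<lambda>i j s t u. \<kappa> (c i j s t u)"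
    by (rule dg_algebra_base_change[OF min_dga_resolution_dg_algebra[OF D] hom surj])
  have P: "maximal_ideal p" and M: "maximal_ideal m"
    using P_local R_local by (simp_all add: local_ring_def)
  have massey: "\<exists>\<mu>. trivial_massey b (\<lambda>i s t. \<kappa> (d i s t)) (\<lambda>i j s t u. \<kappa> (c i j s t u)) m H \<mu> \<and>
      (\<forall>hs. hs \<noteq> [] \<and> set hs \<subseteq> H \<longrightarrow> (\<forall>s. \<mu> hs s \<in> ideal_pow m a))"
    if H: "hbasis b (\<lambda>i s t. \<kappa> (d i s t)) m H" for H
  proof (rule A.trivial_massey_exists[OF is_ideal_ideal_pow is_ideal_ideal_pow])
    show "x * y \<in> ideal_pow m (2 * a)" if "x \<in> ideal_pow m a" "y \<in> ideal_pow m a" for x y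
      using ideal_pow_mult[OF that] by (simp add: mult_2)
    show "\<exists>z\<in>snd h. z \<in> vec (b (fst h)) \<and> cdiff b (\<lambda>i s t. \<kappa> (d i s t)) (fst h) z = vzero \<and>
        (\<forall>s. z s \<in> ideal_pow m a)" if "h \<in> H" for h
      using A.tor_cond1_representative[OF cond1] H that unfolding hbasis_def by auto
    show "ideal_pow m a \<subseteq> m" by (rule ideal_pow_subset[OF maximal_idealD(1)[OF M] a_pos])
  qed (use cond2 in \<open>auto simp: tor_cond2_def\<close>)
  obtain H where "hbasis b (\<lambda>i s t. \<kappa> (d i s t)) m H"
    using A.hbasis_exists[OF M base_change_annihilates_homology[OF hom surj P M local_hom D]] by blast
  then show ?thesis using massey unfolding golod_def by blast
qed

end
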